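(* $\operatorname{conv}(M^\Lambda)=\operatorname{proj}_{(\lambda,w)}\bigl(\mathrm{RLT}_d(\Lambda)\bigr)=R$, where $$R=\Bigl\{(\lambda,w)\ \Bigm|\ w\ge0,\ \sum_{j\in E}w_j=1,\ \lambda_{ij_i}=\sum_{p\in E:\,p_i=j_i}w_p\ \text{ for }i\in[d],\ j\in E\Bigr\}.$$
   Context: Let $d,n$ be positive integers, $[d]=\{1,\dots,d\}$, $E=\{0,\dots,n\}^d$. $\Lambda_i=\{\lambda_i\in\mathbb{R}^{n+1}\mid\sum_{j=0}^n\lambda_{ij}=1,\lambda_i\ge0\}$, $\Lambda=\prod_{i=1}^d\Lambda_i$, and $M^\Lambda=\{(\lambda,w)\mid\lambda\in\Lambda,\ w_j=\prod_{i=1}^d\lambda_{ij_i}\text{ for }j\in E\}$. $\mathrm{RLT}_d(\Lambda)$ is the $d$-th level reformulation-linearization relaxation of $\Lambda$: for each $I\subseteq[d]$ and map $j:I\to\{0,\dots,n\}$ introduce a variable $y_{(I,j)}$ linearizing $\prod_{i\in I}\lambda_{ij(i)}$, with $y_{(\emptyset,\cdot)}=1$, $y_{(\{i\},j)}=\lambda_{ij(i)}$ and $w_j=y_{([d],j)}$ for $j\in E$. The constraints are the linearizations of the products $\prod_{i\in I}\lambda_{ij(i)}\cdot\prod_{i\notin I}(1-\sum_{k=0}^n\lambda_{ik})$ of one constraint factor per block: $y_{([d],j)}\ge0$ for all $j\in E$, and for every proper subset $I\subsetneq[d]$ and $j:I\to\{0,\dots,n\}$, $\sum_{I\subseteq I'\subseteq[d]}(-1)^{|I'\setminus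 I|}\sum_{j':I'\to\{0,\dots,n\},\ j'|_I=j}y_{(I',j')}=0$. *)

theory Defs
  imports "HOL-Analysis.Analysis" "HOL-Library.Function_Algebras"
begin

instantiation "fun" :: (type, real_vector) real_vector
begin
definition scaleR_fun :: "real \<Rightarrow> ('a \<Rightarrow> 'b) \<Rightarrow> 'a \<Rightarrow> 'b"
  where "scaleR_fun r f = (\<lambda>x. r *\<^sub>R f x)"
instance
  by standard (simp_all add: scaleR_fun_def fun_eq_iff plus_fun_def scaleR_add_right scaleR_add_left)
end

text \<open>Points are pairs (lam, w) with lam i j the coordinate lambda_{ij} (i in {1..d},
 j in {0..n}) and w j the coordinate indexed by j in E (extensional maps {1..d} -> {0..n}).
 Coordinates outside these index ranges are fixed to 0, so that the points live in a real
 vector space isomorphic to the finite-dimensional coordinate space.\<close>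

definition Eset :: "nat \<Rightarrow> nat \<Rightarrow> (nat \<Rightarrow> nat) set" where
  "Eset d n = PiE {1..d} (\<lambda>_. {0..n})"

definition zero_outside :: "nat \<Rightarrow> nat \<Rightarrow> (nat \<Rightarrow> nat \<Rightarrow> real) \<Rightarrow> ((nat \<Rightarrow> nat) \<Rightarrow> real) \<Rightarrow> bool" where
  "zero_outside d n lam w \<longleftrightarrow>
     (\<forall>i j. (i \<notin> {1..d} \<or> j \<notin> {0..n}) \<longrightarrow> lam i j = 0) \<and>
     (\<forall>j. j \<notin> Eset d n \<longrightarrow> w j = 0)"

definition inLambda :: "nat \<Rightarrow> nat \<Rightarrow> (nat \<Rightarrow> nat \<Rightarrow> real) \<Rightarrow> bool" where
  "inLambda d n lam \<longleftrightarrow>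
     (\<forall>i\<in>{1..d}. (\<forall>j\<in>{0..n}. lam i j \<ge> 0) \<and> (\<Sum>j\<in>{0..n}. lam i j) = 1)"

definition MLambda :: "nat \<Rightarrow> nat \<Rightarrow> ((nat \<Rightarrow> nat \<Rightarrow> real) \<times> ((nat \<Rightarrow> nat) \<Rightarrow> real)) set" where
  "MLambda d n = {(lam, w). zero_outside d n lam w \<and> inLambda d n lam \<and>
      (\<forall>j\<in>Eset d n. w j = (\<Prod>i\<in>{1..d}. lam i (j i)))}"

text \<open>Variables y (I, j) for I a subset of {1..d} and j an extensional map I -> {0..n}.\<close>

definition RLT :: "nat \<Rightarrow> nat \<Rightarrow> (nat set \<times> (nat \<Rightarrow> nat) \<Rightarrow> real) set" where
  "RLT d n = {y.
     y ({}, (\<lambda>_. undefined)) = 1 \<and>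
     (\<forall>j\<in>Eset d n. y ({1..d}, j) \<ge> 0) \<and>
     (\<forall>I. I \<subset> {1..d} \<longrightarrow> (\<forall>j\<in>PiE I (\<lambda>_. {0..n}).
        (\<Sum>I'\<in>{I'. I \<subseteq> I' \<and> I' \<subseteq> {1..d}}.
           (-1::real) ^ card (I' - I) *
           (\<Sum>j'\<in>{j'\<in>PiE I' (\<lambda>_. {0..n}). restrict j' I = j}. y (I', j'))) = 0))}"

definition projRLT :: "nat \<Rightarrow> nat \<Rightarrow> ((nat \<Rightarrow> nat \<Rightarrow> real) \<times> ((nat \<Rightarrow> nat) \<Rightarrow> real)) set" where
  "projRLT d n = {(lam, w). zero_outside d n lam w \<and>
     (\<exists>y\<in>RLT d n.
        (\<forall>i\<in>{1..d}. \<forall>j\<in>{0..n}. lam i j = y ({i}, restrict (\<lambda>_. j) {i})) \<and>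
        (\<forall>j\<in>Eset d n. w j = y ({1..d}, j)))}"

definition Rset :: "nat \<Rightarrow> nat \<Rightarrow> ((nat \<Rightarrow> nat \<Rightarrow> real) \<times> ((nat \<Rightarrow> nat) \<Rightarrow> real)) set" where
  "Rset d n = {(lam, w). zero_outside d n lam w \<and>
     (\<forall>j\<in>Eset d n. w j \<ge> 0) \<and> (\<Sum>j\<in>Eset d n. w j) = 1 \<and>
     (\<forall>i\<in>{1..d}. \<forall>j\<in>Eset d n. lam i (j i) = (\<Sum>p\<in>{p\<in>Eset d n. p i = j i}. w p))}"

end

theory Submission
  imports Defs
begin

text \<open>As the alternating sum of signs over a nontrivial
interval is zero, the marginals of any probability vector w satisfy every constraint; conversely,
by downward induction on I, the constraints force y(I, j) to be the marginal of w = y([d], -). Points of M^Lambda lie in R because the sum of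
lambda_{1 p_1} ... lambda_{d p_d} over the p with one coordinate fixed factors, and every point
of R is the convex combination, with weights w_p, of the 0/1 points of M^Lambda indexed by p.\<close>

lemma sum_minus_one_power_card_diff_eq_0:
  assumes "finite S" "U \<subset> S"
  shows "(\<Sum>T\<in>{T. U \<subseteq> T \<and> T \<subseteq> S}. (-1::'a::ring_1) ^ card (T - U)) = 0"
proof -
  have sign: "(-1::'a) ^ card (T - U) = (-1) ^ card U * (-1) ^ card T"
    if "U \<subseteq> T" "T \<subseteq> S" for T
  proof -
    have "finite T" using that assms(1) finite_subset by blast
    then have "card T = card U + card (T - U)"
      using that(1) by (simp add: card_Diff_subset card_mono finite_subset)
    then have "(-1::'a) ^ card U * (-1) ^ card T = (-1) ^ (2 * card U) * (-1) ^ card (T - U)"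
      by (simp add: power_add mult_2 mult.assoc)
    then show ?thesis by simp
  qed
  have alternating: "(\<Sum>T\<in>{T. U \<subseteq> T \<and> T \<subseteq> S}. (-1::'a) ^ card T) = 0"
  proof (rule sum_alternating_cancels)
    show "card {T. T \<in> {T. U \<subseteq> T \<and> T \<subseteq> S} \<and> even (card T)}
        = card {T. T \<in> {T. U \<subseteq> T \<and> T \<subseteq> S} \<and> odd (card T)}"
      using card_subsupersets_even_odd[OF assms] by (simp add: conj_ac)
  qed (use assms(1) in simp)
  have "(\<Sum>T\<in>{T. U \<subseteq> T \<and> T \<subseteq> S}. (-1::'a) ^ card (T - U))
      = (\<Sum>T\<in>{T. U \<subseteq> T \<and> T \<subseteq> S}. (-1) ^ card U * (-1) ^ card T)"
    by (rule sum.cong) (auto simp: sign)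
  also have "\<dots> = 0"
    by (simp add: alternating flip: sum_distrib_left)
  finally show ?thesis .
qed

lemma sum_prod_PiE_fixed:
  fixes f :: "'a \<Rightarrow> 'b \<Rightarrow> 'c::comm_semiring_1"
  assumes "finite I" "i0 \<in> I" "\<And>i. i \<in> I \<Longrightarrow> finite (A i)" "k \<in> A i0"
  shows "(\<Sum>g\<in>{g\<in>PiE I A. g i0 = k}. \<Prod>i\<in>I. f i (g i))
       = f i0 k * (\<Prod>i\<in>I - {i0}. \<Sum>j\<in>A i. f i j)"
proof -
  have "{g\<in>PiE I A. g i0 = k} = PiE I (\<lambda>i. if i = i0 then {k} else A i)"
    using assms(2,4) by (force simp: PiE_iff extensional_def split: if_splits)
  then have "(\<Sum>g\<in>{g\<in>PiE I A. g i0 = k}. \<Prod>i\<in>I. f i (g i))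
      = (\<Prod>i\<in>I. \<Sum>j\<in>(if i = i0 then {k} else A i). f i j)"
    using assms(1,3) by (simp add: prod_sum_PiE)
  also have "\<dots> = f i0 k * (\<Prod>i\<in>I - {i0}. \<Sum>j\<in>A i. f i j)"
    using assms(1,2) by (simp add: prod.remove)
  finally show ?thesis .
qed

lemma sum_fun_apply: "(\<Sum>x\<in>A. f x) y = (\<Sum>x\<in>A. f x y)"
  by (induction A rule: infinite_finite_induct) auto

lemma restrict_singleton_eq_iff: "restrict f {i} = restrict g {i} \<longleftrightarrow> f i = g i"
  by (auto simp: fun_eq_iff restrict_def)

lemma finite_Eset [simp]: "finite (Eset d n)"
  by (simp add: Eset_def finite_PiE)

lemma Eset_coordinate: "p \<in> Eset d n \<Longrightarrow> i \<in> {1..d} \<Longrightarrow> p i \<le> n"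
  by (auto simp: Eset_def)

lemma Eset_eq_iff: "p \<in> Eset d n \<Longrightarrow> q \<in> Eset d n \<Longrightarrow> p = q \<longleftrightarrow> (\<forall>i\<in>{1..d}. p i = q i)"
  unfolding Eset_def by (metis PiE_ext)

lemma restrict_Eset_in_PiE: "p \<in> Eset d n \<Longrightarrow> I \<subseteq> {1..d} \<Longrightarrow> restrict p I \<in> PiE I (\<lambda>_. {0..n})"
  by (auto simp: Eset_def PiE_iff)

definition marginal :: "nat \<Rightarrow> nat \<Rightarrow> ((nat \<Rightarrow> nat) \<Rightarrow> real) \<Rightarrow> nat set \<Rightarrow> (nat \<Rightarrow> nat) \<Rightarrow> real" where
  "marginal d n w I j = (\<Sum>p\<in>{p\<in>Eset d n. restrict p I = j}. w p)"

lemma marginal_empty: "marginal d n w {} (\<lambda>_. undefined) = sum w (Eset d n)"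
  by (simp add: marginal_def restrict_def)

lemma marginal_singleton:
  "marginal d n w {i} (restrict (\<lambda>_. k) {i}) = (\<Sum>p\<in>{p\<in>Eset d n. p i = k}. w p)"
  by (simp add: marginal_def restrict_singleton_eq_iff)

lemma marginal_full:
  assumes "j \<in> Eset d n"
  shows "marginal d n w {1..d} j = w j"
proof -
  have "{p\<in>Eset d n. restrict p {1..d} = j} = {j}"
    using assms by (auto simp: Eset_def PiE_restrict)
  then show ?thesis by (simp add: marginal_def)
qed

lemma sum_marginal_refine:
  assumes "I \<subseteq> I'" "I' \<subseteq> {1..d}"
  shows "(\<Sum>j'\<in>{j'\<in>PiE I' (\<lambda>_. {0..n}). restrict j' I = j}. marginal d n w I' j')
       = marginal d n w I j"
proof -
  let ?S = "{p\<in>Eset d n. restrict p I = j}"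
  let ?T = "{j'\<in>PiE I' (\<lambda>_. {0..n}). restrict j' I = j}"
  have restrict_twice: "restrict (restrict p I') I = restrict p I" for p :: "nat \<Rightarrow> nat"
    using assms(1) by (simp add: Int_absorb1)
  have "finite (PiE I' (\<lambda>_. {0..n}))"
    using finite_subset[OF assms(2)] by (simp add: finite_PiE)
  then have "finite ?T" by simp
  moreover have "(\<lambda>p. restrict p I') ` ?S \<subseteq> ?T"
  proof (rule image_subsetI)
    fix p assume "p \<in> ?S"
    then have "restrict p I' \<in> PiE I' (\<lambda>_. {0..n})" "restrict (restrict p I') I = j"
      using restrict_Eset_in_PiE[OF _ assms(2)] restrict_twice by auto
    then show "restrict p I' \<in> ?T" by blast
  qed
  ultimately have "(\<Sum>j'\<in>?T. \<Sum>p\<in>{p\<in>?S. restrict p I' = j'}. w p) = sum w ?S"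
    by (intro sum.group) auto
  moreover have "{p\<in>?S. restrict p I' = j'} = {p\<in>Eset d n. restrict p I' = j'}" if "j' \<in> ?T" for j'
    using that restrict_twice by auto
  ultimately show ?thesis
    unfolding marginal_def by (metis (no_types, lifting) sum.cong)
qed

lemma RLT_eq_marginal:
  assumes "y \<in> RLT d n" "I \<subseteq> {1..d}" "j \<in> PiE I (\<lambda>_. {0..n})"
  shows "y (I, j) = marginal d n (\<lambda>p. y ({1..d}, p)) I j"
  using assms(2,3)
proof (induction "card ({1..d} - I)" arbitrary: I j rule: less_induct)
  case less
  let ?W = "marginal d n (\<lambda>p. y ({1..d}, p)) I j"
  show ?case
  proof (cases "I = {1..d}")
    case True
    then have "j \<in> Eset d n" using less.prems(2) by (simp add: Eset_def)
    then show ?thesis using True marginal_full by simp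
  next
    case False
    then have proper: "I \<subset> {1..d}" using less.prems(1) by auto
    let ?S = "{I'. I \<subseteq> I' \<and> I' \<subseteq> {1..d}}"
    let ?sgn = "\<lambda>I'. (-1::real) ^ card (I' - I)"
    let ?F = "\<lambda>I'. \<Sum>j'\<in>{j'\<in>PiE I' (\<lambda>_. {0..n}). restrict j' I = j}. y (I', j')"
    have "finite ?S" by (rule finite_subset[of _ "Pow {1..d}"]) auto
    have "I \<in> ?S" using less.prems(1) by auto
    have "{j'\<in>PiE I (\<lambda>_. {0..n}). restrict j' I = j} = {j}"
      using less.prems(2) by (auto simp: PiE_restrict)
    then have F_self: "?F I = y (I, j)" by simp
    have F_larger: "?F I' = ?W" if "I' \<in> ?S - {I}" for I'
    proof -
      have "card ({1..d} - I') < card ({1..d} - I)"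
        using that by (intro psubset_card_mono) auto
      then have "?F I' = (\<Sum>j'\<in>{j'\<in>PiE I' (\<lambda>_. {0..n}). restrict j' I = j}.
                            marginal d n (\<lambda>p. y ({1..d}, p)) I' j')"
        using less.hyps that by (intro sum.cong) auto
      also have "\<dots> = ?W" using that by (intro sum_marginal_refine) auto
      finally show ?thesis .
    qed
    have "0 = (\<Sum>I'\<in>?S. ?sgn I' * ?F I')"
      using assms(1) proper less.prems(2) unfolding RLT_def by auto
    also have "\<dots> = ?sgn I * ?F I + (\<Sum>I'\<in>?S - {I}. ?sgn I' * ?F I')"
      using \<open>finite ?S\<close> \<open>I \<in> ?S\<close> by (rule sum.remove)
    also have "(\<Sum>I'\<in>?S - {I}. ?sgn I' * ?F I') = (\<Sum>I'\<in>?S - {I}. ?sgn I') * ?W"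
      unfolding sum_distrib_right by (rule sum.cong) (simp_all add: F_larger)
    also have "?sgn I * ?F I = y (I, j)"
      using F_self by simp
    also have "(\<Sum>I'\<in>?S - {I}. ?sgn I') = (\<Sum>I'\<in>?S. ?sgn I') - 1"
      using sum.remove[OF \<open>finite ?S\<close> \<open>I \<in> ?S\<close>, of ?sgn] by simp
    also have "\<dots> = -1"
      using sum_minus_one_power_card_diff_eq_0[where 'a=real, OF _ proper] by simp
    finally show ?thesis by linarith
  qed
qed

lemma marginal_in_RLT:
  assumes "\<forall>p\<in>Eset d n. w p \<ge> 0" "sum w (Eset d n) = 1"
  shows "(\<lambda>(I, j). marginal d n w I j) \<in> RLT d n"
  unfolding RLT_def
proof (intro CollectI conjI ballI allI impI)
  show "(\<lambda>(I, j). marginal d n w I j) ({}, \<lambda>_. undefined) = 1"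
    using assms(2) by (simp add: marginal_empty)
  show "0 \<le> (\<lambda>(I, j). marginal d n w I j) ({1..d}, j)" if "j \<in> Eset d n" for j
    using that assms(1) marginal_full[OF that] by simp
  fix I j assume "I \<subset> {1..d}" "j \<in> PiE I (\<lambda>_. {0..n})"
  have "(\<Sum>I'\<in>{I'. I \<subseteq> I' \<and> I' \<subseteq> {1..d}}. (-1) ^ card (I' - I) *
          (\<Sum>j'\<in>{j'\<in>PiE I' (\<lambda>_. {0..n}). restrict j' I = j}. marginal d n w I' j'))
      = (\<Sum>I'\<in>{I'. I \<subseteq> I' \<and> I' \<subseteq> {1..d}}. (-1) ^ card (I' - I)) * marginal d n w I j"
    unfolding sum_distrib_right by (rule sum.cong) (auto simp: sum_marginal_refine)
  also have "\<dots> = 0"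
    using sum_minus_one_power_card_diff_eq_0[where 'a=real, OF _ \<open>I \<subset> {1..d}\<close>] by simp
  finally show "(\<Sum>I'\<in>{I'. I \<subseteq> I' \<and> I' \<subseteq> {1..d}}. (-1) ^ card (I' - I) *
          (\<Sum>j'\<in>{j'\<in>PiE I' (\<lambda>_. {0..n}). restrict j' I = j}.
             (\<lambda>(I, j). marginal d n w I j) (I', j'))) = 0"
    by simp
qed

lemma projRLT_subset_Rset: "projRLT d n \<subseteq> Rset d n"
proof safe
  fix lam w assume "(lam, w) \<in> projRLT d n"
  then obtain y where "zero_outside d n lam w" and y: "y \<in> RLT d n"
    and lam_y: "\<forall>i\<in>{1..d}. \<forall>k\<in>{0..n}. lam i k = y ({i}, restrict (\<lambda>_. k) {i})"
    and w_y: "\<forall>j\<in>Eset d n. w j = y ({1..d}, j)"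
    unfolding projRLT_def by blast
  have marginal_w: "y (I, j) = marginal d n w I j"
    if "I \<subseteq> {1..d}" "j \<in> PiE I (\<lambda>_. {0..n})" for I j
    unfolding RLT_eq_marginal[OF y that] marginal_def using w_y by (intro sum.cong) auto
  have "sum w (Eset d n) = 1"
    using marginal_w[of "{}" "\<lambda>_. undefined"] y by (simp add: RLT_def marginal_empty)
  moreover have "lam i (j i) = (\<Sum>p\<in>{p\<in>Eset d n. p i = j i}. w p)"
    if "i \<in> {1..d}" "j \<in> Eset d n" for i j
  proof -
    have "lam i (j i) = y ({i}, restrict (\<lambda>_. j i) {i})"
      using lam_y that Eset_coordinate by simp
    also have "\<dots> = marginal d n w {i} (restrict (\<lambda>_. j i) {i})"
      using that Eset_coordinate by (intro marginal_w) auto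
    finally show ?thesis by (simp add: marginal_singleton)
  qed
  moreover have "\<forall>j\<in>Eset d n. w j \<ge> 0"
    using y w_y by (simp add: RLT_def)
  ultimately show "(lam, w) \<in> Rset d n"
    unfolding Rset_def using \<open>zero_outside d n lam w\<close> by auto
qed

lemma Rset_subset_projRLT: "Rset d n \<subseteq> projRLT d n"
proof safe
  fix lam w assume "(lam, w) \<in> Rset d n"
  then have "zero_outside d n lam w" and w: "\<forall>j\<in>Eset d n. w j \<ge> 0" "sum w (Eset d n) = 1"
    and lam_w: "\<forall>i\<in>{1..d}. \<forall>j\<in>Eset d n. lam i (j i) = (\<Sum>p\<in>{p\<in>Eset d n. p i = j i}. w p)"
    unfolding Rset_def by auto
  have "lam i k = marginal d n w {i} (restrict (\<lambda>_. k) {i})" if "i \<in> {1..d}" "k \<in> {0..n}" for i k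
    using that lam_w[rule_format, of i "restrict (\<lambda>_. k) {1..d}"]
    by (simp add: marginal_singleton Eset_def)
  then show "(lam, w) \<in> projRLT d n"
    unfolding projRLT_def using \<open>zero_outside d n lam w\<close> marginal_in_RLT[OF w]
    \<comment> \<open>without One_nat_def, simp would turn {1..d} into {Suc 0..d} before marginal_full applies\<close>
    by (auto simp: marginal_full simp del: One_nat_def
        intro!: bexI[of _ "\<lambda>(I, j). marginal d n w I j"])
qed

definition vertex :: "nat \<Rightarrow> (nat \<Rightarrow> nat) \<Rightarrow> (nat \<Rightarrow> nat \<Rightarrow> real) \<times> ((nat \<Rightarrow> nat) \<Rightarrow> real)" where
  "vertex d p = ((\<lambda>i j. if i \<in> {1..d} \<and> p i = j then 1 else 0), (\<lambda>q. if q = p then 1 else 0))"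

lemma vertex_in_MLambda:
  assumes p: "p \<in> Eset d n"
  shows "vertex d p \<in> MLambda d n"
proof -
  let ?lam = "fst (vertex d p)" and ?w = "snd (vertex d p)"
  have "zero_outside d n ?lam ?w"
    using p by (auto simp: zero_outside_def vertex_def Eset_coordinate)
  moreover have "inLambda d n ?lam"
    using p by (simp add: inLambda_def vertex_def Eset_coordinate sum.delta)
  moreover have "?w q = (\<Prod>i\<in>{1..d}. ?lam i (q i))" if q: "q \<in> Eset d n" for q
  proof (cases "q = p")
    case False
    then obtain i where "i \<in> {1..d}" "p i \<noteq> q i"
      using Eset_eq_iff[OF p q] by auto
    then show ?thesis
      using False by (auto simp: vertex_def prod_zero_iff)
  qed (simp add: vertex_def)
  ultimately show ?thesis
    unfolding MLambda_def by (cases "vertex d p") auto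
qed

lemma MLambda_subset_Rset: "MLambda d n \<subseteq> Rset d n"
proof safe
  fix lam w assume "(lam, w) \<in> MLambda d n"
  then have "zero_outside d n lam w"
    and lam_nonneg: "\<And>i k. i \<in> {1..d} \<Longrightarrow> k \<in> {0..n} \<Longrightarrow> lam i k \<ge> 0"
    and lam_sum: "\<And>i. i \<in> {1..d} \<Longrightarrow> (\<Sum>k\<in>{0..n}. lam i k) = 1"
    and w: "\<And>p. p \<in> Eset d n \<Longrightarrow> w p = (\<Prod>i\<in>{1..d}. lam i (p i))"
    unfolding MLambda_def inLambda_def by auto
  have "w p \<ge> 0" if "p \<in> Eset d n" for p
    unfolding w[OF that] using that by (intro prod_nonneg lam_nonneg) (auto simp: Eset_coordinate)
  moreover have "sum w (Eset d n) = 1"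
  proof -
    have "sum w (Eset d n) = (\<Sum>p\<in>Eset d n. \<Prod>i\<in>{1..d}. lam i (p i))"
      using w by simp
    also have "\<dots> = (\<Prod>i\<in>{1..d}. \<Sum>k\<in>{0..n}. lam i k)"
      unfolding Eset_def by (rule prod_sum_PiE[symmetric]) auto
    also have "\<dots> = 1"
      using lam_sum by simp
    finally show ?thesis .
  qed
  moreover have "lam i k = (\<Sum>p\<in>{p\<in>Eset d n. p i = k}. w p)" if "i \<in> {1..d}" "k \<in> {0..n}" for i k
  proof -
    have "(\<Sum>p\<in>{p\<in>Eset d n. p i = k}. w p) = (\<Sum>p\<in>{p\<in>Eset d n. p i = k}. \<Prod>i\<in>{1..d}. lam i (p i))"
      using w by simp
    also have "\<dots> = lam i k * (\<Prod>i'\<in>{1..d} - {i}. \<Sum>k'\<in>{0..n}. lam i' k')"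
      unfolding Eset_def using that by (intro sum_prod_PiE_fixed) auto
    also have "\<dots> = lam i k"
      using lam_sum by simp
    finally show ?thesis ..
  qed
  ultimately show "(lam, w) \<in> Rset d n"
    unfolding Rset_def using \<open>zero_outside d n lam w\<close> Eset_coordinate by auto
qed

lemma convex_Rset: "convex (Rset d n)"
  unfolding convex_def
proof (intro ballI allI impI)
  fix x y :: "(nat \<Rightarrow> nat \<Rightarrow> real) \<times> ((nat \<Rightarrow> nat) \<Rightarrow> real)" and u v :: real
  assume "x \<in> Rset d n" "y \<in> Rset d n" "0 \<le> u" "0 \<le> v" "u + v = 1"
  moreover obtain lam1 w1 lam2 w2 where "x = (lam1, w1)" "y = (lam2, w2)" by fastforce
  moreover have "finite {p\<in>Eset d n. p i = k}" for i k by simp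
  ultimately show "u *\<^sub>R x + v *\<^sub>R y \<in> Rset d n"
    by (auto simp: Rset_def zero_outside_def scaleR_fun_def sum.distrib
        simp flip: sum_distrib_left)
qed

lemma sum_scaleR_vertex:
  assumes "(lam, w) \<in> Rset d n"
  shows "(\<Sum>p\<in>Eset d n. w p *\<^sub>R vertex d p) = (lam, w)"
proof
  from assms have zero: "zero_outside d n lam w"
    and lam_w: "\<forall>i\<in>{1..d}. \<forall>j\<in>Eset d n. lam i (j i) = (\<Sum>p\<in>{p\<in>Eset d n. p i = j i}. w p)"
    unfolding Rset_def by auto
  have "(\<Sum>p\<in>Eset d n. if i \<in> {1..d} \<and> p i = k then w p else 0) = lam i k" for i k
  proof (cases "i \<in> {1..d} \<and> k \<in> {0..n}")
    case True
    then have const_k: "restrict (\<lambda>_. k) {1..d} \<in> Eset d n"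
      by (simp add: Eset_def)
    have "lam i k = (\<Sum>p\<in>{p\<in>Eset d n. p i = k}. w p)"
      using lam_w[rule_format, OF _ const_k, of i] True by simp
    then show ?thesis
      using True by (simp add: sum.inter_filter)
  next
    case False
    then show ?thesis
      using zero by (auto simp: zero_outside_def Eset_coordinate intro!: sum.neutral)
  qed
  then show "fst (\<Sum>p\<in>Eset d n. w p *\<^sub>R vertex d p) = fst (lam, w)"
    by (simp add: fst_sum sum_fun_apply scaleR_fun_def vertex_def if_distrib fun_eq_iff cong: if_cong)
  have "(\<Sum>p\<in>Eset d n. if q = p then w p else 0) = w q" for q
    using zero by (simp add: sum.delta zero_outside_def)
  then show "snd (\<Sum>p\<in>Eset d n. w p *\<^sub>R vertex d p) = snd (lam, w)"
    by (simp add: snd_sum sum_fun_apply scaleR_fun_def vertex_def if_distrib fun_eq_iff cong: if_cong)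
qed

lemma Rset_subset_convex_hull_MLambda: "Rset d n \<subseteq> convex hull (MLambda d n)"
proof safe
  fix lam w assume R: "(lam, w) \<in> Rset d n"
  then have "\<forall>p\<in>Eset d n. w p \<ge> 0" "sum w (Eset d n) = 1"
    unfolding Rset_def by auto
  then have "(\<Sum>p\<in>Eset d n. w p *\<^sub>R vertex d p) \<in> convex hull (MLambda d n)"
    by (intro convex_sum convex_convex_hull hull_inc vertex_in_MLambda) auto
  then show "(lam, w) \<in> convex hull (MLambda d n)"
    by (simp add: sum_scaleR_vertex[OF R])
qed

lemma convex_hull_MLambda_eq_Rset: "convex hull (MLambda d n) = Rset d n"
  using hull_minimal[of "MLambda d n" "Rset d n" convex, OF MLambda_subset_Rset convex_Rset]
    Rset_subset_convex_hull_MLambda by blast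

lemma projRLT_eq_Rset: "projRLT d n = Rset d n"
  using projRLT_subset_Rset Rset_subset_projRLT by blast

theorem theorem4p6:
  fixes d n :: nat
  assumes "0 < d" and "0 < n"
  shows "convex hull (MLambda d n) = projRLT d n \<and> projRLT d n = Rset d n"
  using convex_hull_MLambda_eq_Rset projRLT_eq_Rset by simp

end
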